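(* Let $\sigma$ be one of the semantics $\mathit{cf2}$, $\mathit{stg2}$, $\mathit{tfcf2}$, $\mathit{cf1.5}$, $\mathit{tfstg2}$, $\mathit{stg1.5}$. Then $\sigma(\mathcal{F})\subseteq\mathit{na}(\mathcal{F})$ for every argumentation framework $\mathcal{F}$. Consequently $\sigma$ satisfies the I-maximality criterion and the CF-reinstatement criterion.
   Context: An argumentation framework (AF) is $\mathcal{F}=(A_{\mathcal{F}},R_{\mathcal{F}})$ with $R_{\mathcal{F}}\subseteq A_{\mathcal{F}}\times A_{\mathcal{F}}$ (possibly infinite); $a\rightarrow b$ means $(a,b)\in R_{\mathcal{F}}$. $\mathcal{F}|_B=(A_{\mathcal{F}}\cap B,R_{\mathcal{F}}\cap(B\times B))$. Conflict-free: no $a,b\in S$ with $a\rightarrow b$. $\mathit{na}(\mathcal{F})$ = set of naive extensions ($\subseteq$-maximal conflict-free sets). $S^\oplus=S\cup\{x:\exists y\in S,\ y\rightarrow x\}$; stage extension: conflict-free $S$ with no conflict-free $T$ such that $S^\oplus\subsetneq T^\oplus$. $S$ defends $a$ if every attacker of $a$ is attacked by some element of $S$. I-maximality: for all $\mathcal{F}$ and $S_1,S_2\in\sigma(\mathcal{F})$, $S_1\subseteq S_2$ implies $S_1=S_2$. CF-reinstatement: for all $\mathcal{F}$ and $S\in\sigma(\mathcal{F})$, if $S$ defends $a$ and $S\cup\{a\}$ is conflict-free then $a\in S$. $\mathrm{SCC}(\mathcal{F})$, $\mathrm{SCC}(a)$: strongly connected components of the attack graph (paths possibly of length 0). $D_S(X)=\{b\in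 X:\exists a\in S\setminus X,\ a\rightarrow b\}$. $\mathit{cf2}$: $S\in\mathit{cf2}(\mathcal{F})$ iff either $|\mathrm{SCC}(\mathcal{F})|=1$ and $S$ is naive in $\mathcal{F}$, or $|\mathrm{SCC}(\mathcal{F})|\ne1$ and for each $X\in\mathrm{SCC}(\mathcal{F})$, $S\cap X\in\mathit{cf2}(\mathcal{F}|_{X\setminus D_S(X)})$, recursively; $S$ is a member only when this recursion is well-founded (no infinite chain of recursive calls) and succeeds. $\mathit{stg2}$: same with stage for naive. $\mathit{tfcf2}$/$\mathit{tfstg2}$: $C^0_S(a)=\mathrm{SCC}(a)$; $C^{\alpha+1}_S(a)$ = component of $a$ in $\mathcal{F}|_{C^\alpha_S(a)\setminus D_S(C^\alpha_S(a))}$ (empty if $a$ not there); for limit $\lambda$, $C^\lambda_S(a)$ = component of $a$ in $\mathcal{F}|_{\bigcap_{\alpha<\lambda}C^\alpha_S(a)}$; $\alpha_S(a)$ = least $\alpha$ with $a\notin C^\alpha_S(a)$ or $C^{\alpha+1}_S(a)=C^\alpha_S(a)$; $S\in\mathit{tfcf2}(\mathcal{F})$ (resp. $\mathit{tfstg2}$) iff $S$ conflict-free and for each $a$, $a\notin C^{\alpha_S(a)}_S(a)$ or $S\cap C^{\alpha_S(a)}_S(a)$ is naive (resp. stage) in $\mathcal{F}|_{C^{\alpha_S(a)}_S(a)}$. $\mathit{cf1.5}$/$\mathit{stg1.5}$: $S$ conflict-free and for each $X\in\mathrm{SCC}(\mathcal{F})$, $S\cap X$ is naive (resp. stage) in $\mathcal{F}|_{X\setminus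 D_S(X)}$. *)

theory Defs
  imports Main
begin

type_synonym 'a af = "'a set \<times> ('a \<times> 'a) set"

definition args :: "'a af \<Rightarrow> 'a set" where "args F = fst F"
definition att :: "'a af \<Rightarrow> ('a \<times> 'a) set" where "att F = snd F"

definition wf_af :: "'a af \<Rightarrow> bool" where
  "wf_af F \<longleftrightarrow> att F \<subseteq> args F \<times> args F"

definition restr :: "'a af \<Rightarrow> 'a set \<Rightarrow> 'a af" where
  "restr F B = (args F \<inter> B, att F \<inter> (B \<times> B))"

definition conflict_free :: "'a af \<Rightarrow> 'a set \<Rightarrow> bool" where
  "conflict_free F S \<longleftrightarrow> S \<subseteq> args F \<and> (\<forall>a\<in>S. \<forall>b\<in>S. (a, b) \<notin> att F)"

definition naive :: "'a af \<Rightarrow> 'a set \<Rightarrow> bool" where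
  "naive F S \<longleftrightarrow> conflict_free F S \<and> (\<forall>T. conflict_free F T \<and> S \<subseteq> T \<longrightarrow> T = S)"

definition na :: "'a af \<Rightarrow> 'a set set" where
  "na F = {S. naive F S}"

definition range_plus :: "'a af \<Rightarrow> 'a set \<Rightarrow> 'a set" where
  "range_plus F S = S \<union> {x. \<exists>y\<in>S. (y, x) \<in> att F}"

definition stage :: "'a af \<Rightarrow> 'a set \<Rightarrow> bool" where
  "stage F S \<longleftrightarrow> conflict_free F S \<and>
     \<not> (\<exists>T. conflict_free F T \<and> range_plus F S \<subset> range_plus F T)"

definition defends :: "'a af \<Rightarrow> 'a set \<Rightarrow> 'a \<Rightarrow> bool" where
  "defends F S a \<longleftrightarrow> (\<forall>b. (b, a) \<in> att F \<longrightarrow> (\<exists>c\<in>S. (c, b) \<in> att F))"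

text \<open>SCC(a): arguments mutually reachable with a (paths of length 0 allowed);
empty if a is not an argument.\<close>
definition scc :: "'a af \<Rightarrow> 'a \<Rightarrow> 'a set" where
  "scc F a = {b \<in> args F. a \<in> args F \<and> (a, b) \<in> (att F)\<^sup>* \<and> (b, a) \<in> (att F)\<^sup>*}"

definition SCCs :: "'a af \<Rightarrow> 'a set set" where
  "SCCs F = {scc F a | a. a \<in> args F}"

definition D :: "'a af \<Rightarrow> 'a set \<Rightarrow> 'a set \<Rightarrow> 'a set" where
  "D F S X = {b \<in> X. \<exists>a \<in> S - X. (a, b) \<in> att F}"

text \<open>Least fixed point = membership only via a well-founded recursion.\<close>
inductive scc_rec :: "('a af \<Rightarrow> 'a set \<Rightarrow> bool) \<Rightarrow> 'a af \<Rightarrow> 'a set \<Rightarrow> bool"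
  for base :: "'a af \<Rightarrow> 'a set \<Rightarrow> bool" where
  single: "\<exists>X. SCCs F = {X} \<Longrightarrow> base F S \<Longrightarrow> scc_rec base F S"
| multi: "\<not> (\<exists>X. SCCs F = {X}) \<Longrightarrow> S \<subseteq> args F \<Longrightarrow>
          (\<forall>X \<in> SCCs F. scc_rec base (restr F (X - D F S X)) (S \<inter> X)) \<Longrightarrow> scc_rec base F S"

definition cf2 :: "'a af \<Rightarrow> 'a set set" where "cf2 F = {S. scc_rec naive F S}"
definition stg2 :: "'a af \<Rightarrow> 'a set set" where "stg2 F = {S. scc_rec stage F S}"

definition cf15 :: "'a af \<Rightarrow> 'a set set" where
  "cf15 F = {S. conflict_free F S \<and>
     (\<forall>X \<in> SCCs F. naive (restr F (X - D F S X)) (S \<inter> X))}"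

definition stg15 :: "'a af \<Rightarrow> 'a set set" where
  "stg15 F = {S. conflict_free F S \<and>
     (\<forall>X \<in> SCCs F. stage (restr F (X - D F S X)) (S \<inter> X))}"

definition comp :: "'a af \<Rightarrow> 'a set \<Rightarrow> 'a \<Rightarrow> 'a set" where
  "comp F B a = scc (restr F B) a"

text \<open>The class {C^alpha_S(a) | alpha ordinal}: the least family containing
C^0 = SCC(a), closed under the successor step and under the limit step
(component of a in the intersection of any nonempty subfamily).\<close>
inductive_set tower :: "'a af \<Rightarrow> 'a set \<Rightarrow> 'a \<Rightarrow> 'a set set"
  for F :: "'a af" and S :: "'a set" and a :: 'a where
  zero: "scc F a \<in> tower F S a"
| succ: "X \<in> tower F S a \<Longrightarrow> comp F (X - D F S X) a \<in> tower F S a"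
| lim: "\<forall>Y \<in> M. Y \<in> tower F S a \<Longrightarrow> M \<noteq> {} \<Longrightarrow> comp F (\<Inter>M) a \<in> tower F S a"

text \<open>C^{alpha_S(a)}_S(a) with a in it is exactly a stage X of the tower containing a
with C^{alpha+1} = C^alpha, i.e. a fixed point of the successor step.\<close>
definition tf_sem :: "('a af \<Rightarrow> 'a set \<Rightarrow> bool) \<Rightarrow> 'a af \<Rightarrow> 'a set set" where
  "tf_sem base F = {S. conflict_free F S \<and>
     (\<forall>a \<in> args F. \<forall>X \<in> tower F S a.
        (a \<notin> X \<or> comp F (X - D F S X) a = X) \<longrightarrow>
        (a \<notin> X \<or> base (restr F X) (S \<inter> X)))}"

definition tfcf2 :: "'a af \<Rightarrow> 'a set set" where "tfcf2 F = tf_sem naive F"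
definition tfstg2 :: "'a af \<Rightarrow> 'a set set" where "tfstg2 F = tf_sem stage F"

definition I_maximal :: "('a af \<Rightarrow> 'a set set) \<Rightarrow> bool" where
  "I_maximal \<sigma> \<longleftrightarrow> (\<forall>F. wf_af F \<longrightarrow>
     (\<forall>S1 \<in> \<sigma> F. \<forall>S2 \<in> \<sigma> F. S1 \<subseteq> S2 \<longrightarrow> S1 = S2))"

definition CF_reinstatement :: "('a af \<Rightarrow> 'a set set) \<Rightarrow> bool" where
  "CF_reinstatement \<sigma> \<longleftrightarrow> (\<forall>F. wf_af F \<longrightarrow>
     (\<forall>S \<in> \<sigma> F. \<forall>a. defends F S a \<and> conflict_free F (insert a S) \<longrightarrow> a \<in> S))"

end

theory Submission
  imports Defs
begin

text \<open>Each of these semantics makes S naive locally: for every argument a, the part of S in a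
region Y around a is naive in F|Y, where Y is the SCC of a with the arguments attacked by S from
outside removed, or, for the transfinite variants, the final stage C^{alpha_S(a)}_S(a) of the
tower of a. If S \<union> {a} is conflict-free, then S never attacks a, so a survives every such
removal and lies in its own region; local maximality then forces a \<in> S. Thus S is a maximal
conflict-free set, and I-maximality and CF-reinstatement only need this maximality.\<close>

lemma conflict_free_subset: "conflict_free F T \<Longrightarrow> S \<subseteq> T \<Longrightarrow> conflict_free F S"
  unfolding conflict_free_def by blast

lemma args_restr [simp]: "args (restr F Y) = args F \<inter> Y"
  by (simp add: restr_def args_def)

lemma att_restr [simp]: "att (restr F Y) = att F \<inter> Y \<times> Y"
  by (simp add: restr_def att_def)

lemma conflict_free_restr:
  "conflict_free (restr F Y) T \<longleftrightarrow> T \<subseteq> Y \<and> conflict_free F T"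
  unfolding conflict_free_def by (simp, blast)

lemma naive_iff_insert:
  "naive F S \<longleftrightarrow> conflict_free F S \<and> (\<forall>a. conflict_free F (insert a S) \<longrightarrow> a \<in> S)"
proof
  assume "naive F S"
  then show "conflict_free F S \<and> (\<forall>a. conflict_free F (insert a S) \<longrightarrow> a \<in> S)"
    unfolding naive_def by blast
next
  assume S: "conflict_free F S \<and> (\<forall>a. conflict_free F (insert a S) \<longrightarrow> a \<in> S)"
  have "a \<in> S" if "conflict_free F T" "S \<subseteq> T" "a \<in> T" for T a
    using S conflict_free_subset[OF that(1)] that(2,3) by blast
  with S show "naive F S" unfolding naive_def by blast
qed

lemma naive_restr_insert:
  assumes "naive (restr F Y) T" and "T \<subseteq> S" and "a \<in> Y" and "conflict_free F (insert a S)"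
  shows "a \<in> T"
proof -
  have "T \<subseteq> Y" using assms(1) by (simp add: naive_iff_insert conflict_free_restr)
  moreover have "conflict_free F (insert a T)"
    using conflict_free_subset[OF assms(4) insert_mono[OF assms(2)]] .
  ultimately have "conflict_free (restr F Y) (insert a T)"
    using assms(3) by (simp add: conflict_free_restr)
  with assms(1) show ?thesis by (simp add: naive_iff_insert)
qed

lemma stage_imp_naive:
  assumes "stage F S"
  shows "naive F S"
  unfolding naive_iff_insert
proof (intro conjI allI impI)
  show "conflict_free F S" using assms by (simp add: stage_def)
  fix a assume cfa: "conflict_free F (insert a S)"
  show "a \<in> S"
  proof (rule ccontr)
    assume "a \<notin> S"
    moreover have "(y, a) \<notin> att F" if "y \<in> S" for y
      using cfa that by (simp add: conflict_free_def)
    ultimately have "a \<notin> range_plus F S" by (auto simp: range_plus_def)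
    moreover have "range_plus F S \<subseteq> range_plus F (insert a S)"
      unfolding range_plus_def by blast
    moreover have "a \<in> range_plus F (insert a S)" by (simp add: range_plus_def)
    ultimately have "range_plus F S \<subset> range_plus F (insert a S)" by blast
    with cfa assms show False by (auto simp: stage_def)
  qed
qed

lemma scc_self: "a \<in> args F \<Longrightarrow> a \<in> scc F a"
  unfolding scc_def by auto

lemma scc_in_SCCs: "a \<in> args F \<Longrightarrow> scc F a \<in> SCCs F"
  unfolding SCCs_def by auto

lemma comp_subset: "comp F B a \<subseteq> B"
  unfolding comp_def scc_def by (simp add: subset_iff)

lemma comp_self: "a \<in> args F \<Longrightarrow> a \<in> B \<Longrightarrow> a \<in> comp F B a"
  unfolding comp_def by (rule scc_self) simp

lemma not_in_D_if_conflict_free_insert: "conflict_free F (insert a S) \<Longrightarrow> a \<notin> D F S X"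
  unfolding conflict_free_def D_def by blast

lemma naive_if_naive_on_SCCs:
  assumes S: "S \<subseteq> args F"
    and naive_X: "\<forall>X \<in> SCCs F. naive (restr F (X - D F S X)) (S \<inter> X)"
  shows "naive F S"
proof -
  have local: "S \<inter> scc F a \<subseteq> scc F a - D F S (scc F a)" "conflict_free F (S \<inter> scc F a)"
    if "a \<in> args F" for a
    using naive_X scc_in_SCCs[OF that] by (simp_all add: naive_iff_insert conflict_free_restr)
  have "conflict_free F S"
    unfolding conflict_free_def
  proof (intro conjI ballI notI)
    show "S \<subseteq> args F" by fact
    fix a b assume ab: "a \<in> S" "b \<in> S" and attack: "(a, b) \<in> att F"
    have b: "b \<in> args F" using S ab by blast
    have bX: "b \<in> S \<inter> scc F b" using ab(2) scc_self[OF b] by blast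
    then have "b \<notin> D F S (scc F b)" using local(1)[OF b] by blast
    then have "a \<in> scc F b" using ab(1) attack bX unfolding D_def by blast
    with local(2)[OF b] ab(1) bX attack show False
      unfolding conflict_free_def by blast
  qed
  moreover have "a \<in> S" if cfa: "conflict_free F (insert a S)" for a
  proof -
    have a: "a \<in> args F" using cfa by (simp add: conflict_free_def)
    have "a \<in> scc F a - D F S (scc F a)"
      using scc_self[OF a] not_in_D_if_conflict_free_insert[OF cfa] by blast
    with naive_X scc_in_SCCs[OF a] have "a \<in> S \<inter> scc F a"
      using naive_restr_insert[OF _ Int_lower1 _ cfa] by blast
    then show "a \<in> S" by blast
  qed
  ultimately show ?thesis by (simp add: naive_iff_insert)
qed

lemma scc_rec_imp_naive:
  assumes "\<And>F S. base F S \<Longrightarrow> naive F S"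
  shows "scc_rec base F S \<Longrightarrow> naive F S"
proof (induction rule: scc_rec.induct)
  case (single F S)
  from single.hyps(2) show ?case by (rule assms)
next
  case (multi F S)
  then show ?case by (simp add: naive_if_naive_on_SCCs)
qed

lemma tower_mem_if_conflict_free_insert:
  assumes a: "a \<in> args F" and cfa: "conflict_free F (insert a S)"
  shows "X \<in> tower F S a \<Longrightarrow> a \<in> X"
proof (induction rule: tower.induct)
  case zero
  show ?case using a by (rule scc_self)
next
  case (succ X)
  then have "a \<in> X - D F S X" using not_in_D_if_conflict_free_insert[OF cfa] by simp
  with a show ?case by (rule comp_self)
next
  case (lim M)
  then have "a \<in> \<Inter> M" by simp
  with a show ?case by (rule comp_self)
qed

lemma Inter_tower_fixpoint:
  fixes F :: "'a af" and S :: "'a set" and a :: 'a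
  defines "C \<equiv> \<Inter> (tower F S a)"
  shows "C \<in> tower F S a" and "comp F (C - D F S C) a = C"
proof -
  have "scc F a \<in> tower F S a" by (rule tower.zero)
  then have "tower F S a \<noteq> {}" by blast
  then have lim: "comp F C a \<in> tower F S a"
    unfolding C_def by (intro tower.lim ballI)
  then have "C \<subseteq> comp F C a" unfolding C_def by (rule Inter_lower)
  with comp_subset have "comp F C a = C" by (rule subset_antisym)
  with lim show C: "C \<in> tower F S a" by simp
  then have "comp F (C - D F S C) a \<in> tower F S a" by (rule tower.succ)
  then have "C \<subseteq> comp F (C - D F S C) a" unfolding C_def by (rule Inter_lower)
  moreover have "comp F (C - D F S C) a \<subseteq> C" using comp_subset[of F "C - D F S C" a] by blast
  ultimately show "comp F (C - D F S C) a = C" by (rule subset_antisym[rotated])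
qed

lemma tf_sem_imp_naive:
  assumes base_naive: "\<And>F S. base F S \<Longrightarrow> naive F S" and S: "S \<in> tf_sem base F"
  shows "naive F S"
  unfolding naive_iff_insert
proof (intro conjI allI impI)
  show "conflict_free F S" using S by (simp add: tf_sem_def)
  fix a assume cfa: "conflict_free F (insert a S)"
  define C where "C \<equiv> \<Inter> (tower F S a)"
  have a: "a \<in> args F" using cfa by (simp add: conflict_free_def)
  have "a \<in> C"
    unfolding C_def using tower_mem_if_conflict_free_insert[OF a cfa] by blast
  with S a Inter_tower_fixpoint[of F S a] have "naive (restr F C) (S \<inter> C)"
    unfolding tf_sem_def C_def by (auto intro: base_naive)
  with \<open>a \<in> C\<close> cfa show "a \<in> S"
    using naive_restr_insert[of F C "S \<inter> C" S a] by blast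
qed

lemma cf2_subset_na: "cf2 F \<subseteq> na F"
  unfolding cf2_def na_def by (blast intro: scc_rec_imp_naive)

lemma stg2_subset_na: "stg2 F \<subseteq> na F"
  unfolding stg2_def na_def by (blast intro: scc_rec_imp_naive stage_imp_naive)

lemma tfcf2_subset_na: "tfcf2 F \<subseteq> na F"
  unfolding tfcf2_def na_def by (blast intro: tf_sem_imp_naive)

lemma tfstg2_subset_na: "tfstg2 F \<subseteq> na F"
  unfolding tfstg2_def na_def by (blast intro: tf_sem_imp_naive stage_imp_naive)

lemma cf15_subset_na: "cf15 F \<subseteq> na F"
proof
  fix S assume "S \<in> cf15 F"
  then have "S \<subseteq> args F" "\<forall>X \<in> SCCs F. naive (restr F (X - D F S X)) (S \<inter> X)"
    by (simp_all add: cf15_def conflict_free_def)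
  then show "S \<in> na F" by (simp add: na_def naive_if_naive_on_SCCs)
qed

lemma stg15_subset_na: "stg15 F \<subseteq> na F"
proof
  fix S assume "S \<in> stg15 F"
  then have "S \<subseteq> args F" "\<forall>X \<in> SCCs F. naive (restr F (X - D F S X)) (S \<inter> X)"
    by (simp_all add: stg15_def conflict_free_def stage_imp_naive)
  then show "S \<in> na F" by (simp add: na_def naive_if_naive_on_SCCs)
qed

lemma I_maximal_if_subset_na:
  "(\<And>F. \<sigma> F \<subseteq> na F) \<Longrightarrow> I_maximal \<sigma>"
  unfolding I_maximal_def na_def naive_def by blast

lemma CF_reinstatement_if_subset_na:
  "(\<And>F. \<sigma> F \<subseteq> na F) \<Longrightarrow> CF_reinstatement \<sigma>"
  unfolding CF_reinstatement_def na_def naive_def by blast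

theorem theorem10:
  fixes \<sigma> :: "'a af \<Rightarrow> 'a set set"
  assumes "\<sigma> \<in> {cf2, stg2, tfcf2, cf15, tfstg2, stg15}"
  shows "(\<forall>F. wf_af F \<longrightarrow> \<sigma> F \<subseteq> na F) \<and> I_maximal \<sigma> \<and> CF_reinstatement \<sigma>"
proof -
  have "\<sigma> F \<subseteq> na F" for F
    using assms cf2_subset_na stg2_subset_na tfcf2_subset_na tfstg2_subset_na
      cf15_subset_na stg15_subset_na
    by (elim insertE emptyE) simp_all
  then show ?thesis
    using I_maximal_if_subset_na CF_reinstatement_if_subset_na by blast
qed

end
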